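(* There is a one-to-one correspondence between strict $2$-term homotopy Nijenhuis algebras and crossed modules of Nijenhuis algebras. Explicitly, a strict $2$-term homotopy Nijenhuis algebra $((\mathcal{A}_1\xrightarrow{\partial}\mathcal{A}_0,\mu_2,\mu_3=0),(\mathcal{N}_0,\mathcal{N}_1,\mathcal{N}_2=0))$ corresponds to the crossed module $\big(((\mathcal{A}_0,\mu_2),\mathcal{N}_0),((\mathcal{A}_1,\cdot_1),\mathcal{N}_1),\partial,\triangleright,\triangleleft\big)$ with $u\cdot_1v=\mu_2(\partial u,v)$, $a\triangleright u=\mu_2(a,u)$, $u\triangleleft a=\mu_2(u,a)$; conversely a crossed module $\big(((A,\cdot),N),((A_1,\cdot_1),N_1),\varphi,\triangleright,\triangleleft\big)$ corresponds to $((A_1\xrightarrow{\varphi}A,\mu_2,0),(N,N_1,0))$ with $\mu_2(a,b)=a\cdot b$, $\mu_2(a,u)=a\triangleright u$, $\mu_2(u,a)=u\triangleleft a$.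
   Context: Over a field of characteristic $0$. A 2-term $A_\infty$-algebra $(\mathcal{A}_1\xrightarrow{\partial}\mathcal{A}_0,\mu_2,\mu_3)$: linear $\partial$, bilinear $\mu_2:\mathcal{A}_i\times\mathcal{A}_j\to\mathcal{A}_{i+j}$ ($0\le i,j,i+j\le1$), trilinear $\mu_3:\mathcal{A}_0^{\times3}\to\mathcal{A}_1$, with, for $a,b,c,d\in\mathcal{A}_0$, $u,v\in\mathcal{A}_1$: $\partial\mu_2(a,u)=\mu_2(a,\partial u)$; $\partial\mu_2(u,a)=\mu_2(\partial u,a)$; $\mu_2(\partial u,v)=\mu_2(u,\partial v)$; $\partial\mu_3(a,b,c)=\mu_2(\mu_2(a,b),c)-\mu_2(a,\mu_2(b,c))$; $\mu_3(a,b,\partial u)=\mu_2(\mu_2(a,b),u)-\mu_2(a,\mu_2(b,u))$; $\mu_3(a,\partial u,b)=\mu_2(\mu_2(a,u),b)-\mu_2(a,\mu_2(u,b))$; $\mu_3(\partial u,a,b)=\mu_2(\mu_2(u,a),b)-\mu_2(u,\mu_2(a,b))$; and a pentagon-type identity for $\mu_3$ (trivially satisfied when $\mu_3=0$). A homotopy Nijenhuis operator is $(\mathcal{N}_0,\mathcal{N}_1,\mathcal{N}_2)$ with $\mathcal{N}_i:\mathcal{A}_i\to\mathcal{A}_i$, $\mathcal{N}_2:\mathcal{A}_0\times\mathcal{A}_0\to\mathcal{A}_1$; when $\mu_3=0$ and $\mathcal{N}_2=0$ (the strict case) its axioms reduce to: $\partial\mathcal{N}_1=\mathcal{N}_0\partial$;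 $\mathcal{N}_0(\mathcal{N}_0(a)b+a\mathcal{N}_0(b)-\mathcal{N}_0(ab))=\mathcal{N}_0(a)\mathcal{N}_0(b)$; $\mathcal{N}_1(\mathcal{N}_0(a)u+a\mathcal{N}_1(u)-\mathcal{N}_1(au))=\mathcal{N}_0(a)\mathcal{N}_1(u)$; $\mathcal{N}_1(\mathcal{N}_1(u)a+u\mathcal{N}_0(a)-\mathcal{N}_1(ua))=\mathcal{N}_1(u)\mathcal{N}_0(a)$ (juxtaposition denotes $\mu_2$). A strict 2-term homotopy Nijenhuis algebra is a 2-term $A_\infty$-algebra with $\mu_3=0$ together with a homotopy Nijenhuis operator with $\mathcal{N}_2=0$. Nijenhuis algebra: associative $(A,\cdot)$ with linear $N$, $N(a)N(b)=N(N(a)b+aN(b)-N(ab))$; homomorphism: algebra map commuting with operators. Nijenhuis bimodule: $A$-bimodule with $N_M$ satisfying $N(a)\triangleright N_M(u)=N_M(N(a)\triangleright u+a\triangleright N_M(u)-N_M(a\triangleright u))$, $N_M(u)\triangleleft N(a)=N_M(N_M(u)\triangleleft a+u\triangleleft N(a)-N_M(u\triangleleft a))$. A crossed module of Nijenhuis algebras $\big(((A,\cdot),N),((A_1,\cdot_1),N_1),\varphi,\triangleright,\triangleleft\big)$: Nijenhuis algebras $((A,\cdot),N)$, $((A_1,\cdot_1),N_1)$, a Nijenhuis algebra homomorphism $\varphi:A_1\to A$, bilinear $\triangleright:A\times A_1\to A_1$, $\triangleleft:A_1\times A\to A_1$ such that $((A_1,\triangleright,\triangleleft),N_1)$ is a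 Nijenhuis bimodule over $((A,\cdot),N)$ and, for $a\in A$, $u,v\in A_1$: $a\triangleright(u\cdot_1v)=(a\triangleright u)\cdot_1v$, $(u\triangleleft a)\cdot_1v=u\cdot_1(a\triangleright v)$, $(u\cdot_1v)\triangleleft a=u\cdot_1(v\triangleleft a)$, $\varphi(a\triangleright u)=a\cdot\varphi(u)$, $\varphi(u\triangleleft a)=\varphi(u)\cdot a$, $\varphi(u)\triangleright v=u\cdot_1v=u\triangleleft\varphi(v)$. *)

theory Defs
  imports Complex_Main
begin

definition bilinear ::
  "('k::field \<Rightarrow> 'a::ab_group_add \<Rightarrow> 'a) \<Rightarrow> ('k \<Rightarrow> 'b::ab_group_add \<Rightarrow> 'b) \<Rightarrow> ('k \<Rightarrow> 'c::ab_group_add \<Rightarrow> 'c)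
     \<Rightarrow> ('a \<Rightarrow> 'b \<Rightarrow> 'c) \<Rightarrow> bool" where
  "bilinear sa sb sc f \<longleftrightarrow>
     (\<forall>x. Vector_Spaces.linear sb sc (f x)) \<and> (\<forall>y. Vector_Spaces.linear sa sc (\<lambda>x. f x y))"

text \<open>Data: differential d : A1 \<rightarrow> A0, the three components of mu2
  (A0 x A0 \<rightarrow> A0, A0 x A1 \<rightarrow> A1, A1 x A0 \<rightarrow> A1), and N0, N1.
  In the strict case mu3 = 0 and N2 = 0, so these are omitted from the data.\<close>

record ('a0, 'a1) hna_data =
  hd   :: "'a1 \<Rightarrow> 'a0"
  m00  :: "'a0 \<Rightarrow> 'a0 \<Rightarrow> 'a0"
  m01  :: "'a0 \<Rightarrow> 'a1 \<Rightarrow> 'a1"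
  m10  :: "'a1 \<Rightarrow> 'a0 \<Rightarrow> 'a1"
  hN0  :: "'a0 \<Rightarrow> 'a0"
  hN1  :: "'a1 \<Rightarrow> 'a1"

text \<open>2-term A-infinity algebra with mu3 = 0 (all axioms with mu3 replaced by 0;
  the pentagon identity is then trivial).\<close>
definition strict_2term_Ainf ::
  "('k::field \<Rightarrow> 'a0::ab_group_add \<Rightarrow> 'a0) \<Rightarrow> ('k \<Rightarrow> 'a1::ab_group_add \<Rightarrow> 'a1) \<Rightarrow> ('a0, 'a1) hna_data \<Rightarrow> bool" where
  "strict_2term_Ainf s0 s1 H \<longleftrightarrow>
     Vector_Spaces.linear s1 s0 (hd H) \<and>
     bilinear s0 s0 s0 (m00 H) \<and> bilinear s0 s1 s1 (m01 H) \<and> bilinear s1 s0 s1 (m10 H) \<and>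
     (\<forall>a u. hd H (m01 H a u) = m00 H a (hd H u)) \<and>
     (\<forall>u a. hd H (m10 H u a) = m00 H (hd H u) a) \<and>
     (\<forall>u v. m01 H (hd H u) v = m10 H u (hd H v)) \<and>
     (\<forall>a b c. 0 = m00 H (m00 H a b) c - m00 H a (m00 H b c)) \<and>
     (\<forall>a b u. 0 = m01 H (m00 H a b) u - m01 H a (m01 H b u)) \<and>
     (\<forall>a u b. 0 = m10 H (m01 H a u) b - m01 H a (m10 H u b)) \<and>
     (\<forall>u a b. 0 = m10 H (m10 H u a) b - m10 H u (m00 H a b))"

definition strict_homotopy_nijenhuis_op ::
  "('k::field \<Rightarrow> 'a0::ab_group_add \<Rightarrow> 'a0) \<Rightarrow> ('k \<Rightarrow> 'a1::ab_group_add \<Rightarrow> 'a1) \<Rightarrow> ('a0, 'a1) hna_data \<Rightarrow> bool" where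
  "strict_homotopy_nijenhuis_op s0 s1 H \<longleftrightarrow>
     Vector_Spaces.linear s0 s0 (hN0 H) \<and> Vector_Spaces.linear s1 s1 (hN1 H) \<and>
     (\<forall>u. hd H (hN1 H u) = hN0 H (hd H u)) \<and>
     (\<forall>a b. hN0 H (m00 H (hN0 H a) b + m00 H a (hN0 H b) - hN0 H (m00 H a b))
              = m00 H (hN0 H a) (hN0 H b)) \<and>
     (\<forall>a u. hN1 H (m01 H (hN0 H a) u + m01 H a (hN1 H u) - hN1 H (m01 H a u))
              = m01 H (hN0 H a) (hN1 H u)) \<and>
     (\<forall>u a. hN1 H (m10 H (hN1 H u) a + m10 H u (hN0 H a) - hN1 H (m10 H u a))
              = m10 H (hN1 H u) (hN0 H a))"

definition strict_2term_HNA ::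
  "('k::field \<Rightarrow> 'a0::ab_group_add \<Rightarrow> 'a0) \<Rightarrow> ('k \<Rightarrow> 'a1::ab_group_add \<Rightarrow> 'a1) \<Rightarrow> ('a0, 'a1) hna_data \<Rightarrow> bool" where
  "strict_2term_HNA s0 s1 H \<longleftrightarrow> strict_2term_Ainf s0 s1 H \<and> strict_homotopy_nijenhuis_op s0 s1 H"

definition assoc_algebra :: "('k::field \<Rightarrow> 'a::ab_group_add \<Rightarrow> 'a) \<Rightarrow> ('a \<Rightarrow> 'a \<Rightarrow> 'a) \<Rightarrow> bool" where
  "assoc_algebra s m \<longleftrightarrow> bilinear s s s m \<and> (\<forall>a b c. m (m a b) c = m a (m b c))"

definition nijenhuis_algebra ::
  "('k::field \<Rightarrow> 'a::ab_group_add \<Rightarrow> 'a) \<Rightarrow> ('a \<Rightarrow> 'a \<Rightarrow> 'a) \<Rightarrow> ('a \<Rightarrow> 'a) \<Rightarrow> bool" where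
  "nijenhuis_algebra s m N \<longleftrightarrow> assoc_algebra s m \<and> Vector_Spaces.linear s s N \<and>
     (\<forall>a b. m (N a) (N b) = N (m (N a) b + m a (N b) - N (m a b)))"

definition nijenhuis_hom ::
  "('k::field \<Rightarrow> 'a::ab_group_add \<Rightarrow> 'a) \<Rightarrow> ('a \<Rightarrow> 'a \<Rightarrow> 'a) \<Rightarrow> ('a \<Rightarrow> 'a)
   \<Rightarrow> ('k \<Rightarrow> 'b::ab_group_add \<Rightarrow> 'b) \<Rightarrow> ('b \<Rightarrow> 'b \<Rightarrow> 'b) \<Rightarrow> ('b \<Rightarrow> 'b) \<Rightarrow> ('a \<Rightarrow> 'b) \<Rightarrow> bool" where
  "nijenhuis_hom sa ma Na sb mb Nb f \<longleftrightarrow>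
     Vector_Spaces.linear sa sb f \<and> (\<forall>x y. f (ma x y) = mb (f x) (f y)) \<and> (\<forall>x. f (Na x) = Nb (f x))"

definition bimodule ::
  "('k::field \<Rightarrow> 'a::ab_group_add \<Rightarrow> 'a) \<Rightarrow> ('a \<Rightarrow> 'a \<Rightarrow> 'a) \<Rightarrow> ('k \<Rightarrow> 'm::ab_group_add \<Rightarrow> 'm)
   \<Rightarrow> ('a \<Rightarrow> 'm \<Rightarrow> 'm) \<Rightarrow> ('m \<Rightarrow> 'a \<Rightarrow> 'm) \<Rightarrow> bool" where
  "bimodule sa m sm l r \<longleftrightarrow>
     bilinear sa sm sm l \<and> bilinear sm sa sm r \<and>
     (\<forall>a b u. l (m a b) u = l a (l b u)) \<and>
     (\<forall>u a b. r (r u a) b = r u (m a b)) \<and>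
     (\<forall>a u b. r (l a u) b = l a (r u b))"

definition nijenhuis_bimodule ::
  "('k::field \<Rightarrow> 'a::ab_group_add \<Rightarrow> 'a) \<Rightarrow> ('a \<Rightarrow> 'a \<Rightarrow> 'a) \<Rightarrow> ('a \<Rightarrow> 'a)
   \<Rightarrow> ('k \<Rightarrow> 'm::ab_group_add \<Rightarrow> 'm) \<Rightarrow> ('a \<Rightarrow> 'm \<Rightarrow> 'm) \<Rightarrow> ('m \<Rightarrow> 'a \<Rightarrow> 'm) \<Rightarrow> ('m \<Rightarrow> 'm) \<Rightarrow> bool" where
  "nijenhuis_bimodule sa m N sm l r NM \<longleftrightarrow>
     bimodule sa m sm l r \<and> Vector_Spaces.linear sm sm NM \<and>
     (\<forall>a u. l (N a) (NM u) = NM (l (N a) u + l a (NM u) - NM (l a u))) \<and>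
     (\<forall>u a. r (NM u) (N a) = NM (r (NM u) a + r u (N a) - NM (r u a)))"

record ('a, 'b) cm_data =
  cmult  :: "'a \<Rightarrow> 'a \<Rightarrow> 'a"
  cN     :: "'a \<Rightarrow> 'a"
  cmult1 :: "'b \<Rightarrow> 'b \<Rightarrow> 'b"
  cN1    :: "'b \<Rightarrow> 'b"
  cphi   :: "'b \<Rightarrow> 'a"
  cl     :: "'a \<Rightarrow> 'b \<Rightarrow> 'b"
  cr     :: "'b \<Rightarrow> 'a \<Rightarrow> 'b"

definition crossed_module_NA ::
  "('k::field \<Rightarrow> 'a::ab_group_add \<Rightarrow> 'a) \<Rightarrow> ('k \<Rightarrow> 'b::ab_group_add \<Rightarrow> 'b) \<Rightarrow> ('a, 'b) cm_data \<Rightarrow> bool" where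
  "crossed_module_NA sa sb C \<longleftrightarrow>
     nijenhuis_algebra sa (cmult C) (cN C) \<and>
     nijenhuis_algebra sb (cmult1 C) (cN1 C) \<and>
     nijenhuis_hom sb (cmult1 C) (cN1 C) sa (cmult C) (cN C) (cphi C) \<and>
     nijenhuis_bimodule sa (cmult C) (cN C) sb (cl C) (cr C) (cN1 C) \<and>
     (\<forall>a u v. cl C a (cmult1 C u v) = cmult1 C (cl C a u) v) \<and>
     (\<forall>u a v. cmult1 C (cr C u a) v = cmult1 C u (cl C a v)) \<and>
     (\<forall>u v a. cr C (cmult1 C u v) a = cmult1 C u (cr C v a)) \<and>
     (\<forall>a u. cphi C (cl C a u) = cmult C a (cphi C u)) \<and>
     (\<forall>u a. cphi C (cr C u a) = cmult C (cphi C u) a) \<and>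
     (\<forall>u v. cl C (cphi C u) v = cmult1 C u v) \<and>
     (\<forall>u v. cmult1 C u v = cr C u (cphi C v))"

definition hna_to_cm :: "('a0, 'a1) hna_data \<Rightarrow> ('a0, 'a1) cm_data" where
  "hna_to_cm H = \<lparr> cmult = m00 H, cN = hN0 H, cmult1 = (\<lambda>u v. m01 H (hd H u) v),
                   cN1 = hN1 H, cphi = hd H, cl = m01 H, cr = m10 H \<rparr>"

definition cm_to_hna :: "('a0, 'a1) cm_data \<Rightarrow> ('a0, 'a1) hna_data" where
  "cm_to_hna C = \<lparr> hd = cphi C, m00 = cmult C, m01 = cl C, m10 = cr C,
                   hN0 = cN C, hN1 = cN1 C \<rparr>"

end

theory Submission
  imports Defs
begin

text \<open>Both kinds of structure amount to the same data: a Nijenhuis algebra \<open>(A, m, N)\<close>, a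
  Nijenhuis bimodule \<open>(M, l, r, N\<^sub>M)\<close> over it and a linear map \<open>\<phi> : M \<rightarrow> A\<close> that intertwines the
  operators, is equivariant for both actions and satisfies the Peiffer identity
  \<open>l (\<phi> u) v = r u (\<phi> v)\<close>. For a strict homotopy Nijenhuis algebra this is a reading of its
  axioms once \<open>\<mu>\<^sub>3 = 0\<close> and \<open>\<N>\<^sub>2 = 0\<close>. For a crossed module it is what remains after forgetting the
  product of \<open>A\<^sub>1\<close>, which is recovered as \<open>u \<cdot>\<^sub>1 v = \<phi>(u) \<triangleright> v\<close>; conversely this induced product is
  associative and Nijenhuis for \<open>N\<^sub>M\<close>, and \<open>\<phi>\<close> is multiplicative for it, by equivariance.\<close>

definition nijenhuis_peiffer_map ::
  "('k::field \<Rightarrow> 'a::ab_group_add \<Rightarrow> 'a) \<Rightarrow> ('a \<Rightarrow> 'a \<Rightarrow> 'a) \<Rightarrow> ('a \<Rightarrow> 'a)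
   \<Rightarrow> ('k \<Rightarrow> 'm::ab_group_add \<Rightarrow> 'm) \<Rightarrow> ('a \<Rightarrow> 'm \<Rightarrow> 'm) \<Rightarrow> ('m \<Rightarrow> 'a \<Rightarrow> 'm) \<Rightarrow> ('m \<Rightarrow> 'm)
   \<Rightarrow> ('m \<Rightarrow> 'a) \<Rightarrow> bool" where
  "nijenhuis_peiffer_map sa m N sm l r NM \<phi> \<longleftrightarrow>
     nijenhuis_algebra sa m N \<and> nijenhuis_bimodule sa m N sm l r NM \<and>
     Vector_Spaces.linear sm sa \<phi> \<and> (\<forall>u. \<phi> (NM u) = N (\<phi> u)) \<and>
     (\<forall>a u. \<phi> (l a u) = m a (\<phi> u)) \<and> (\<forall>u a. \<phi> (r u a) = m (\<phi> u) a) \<and>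
     (\<forall>u v. l (\<phi> u) v = r u (\<phi> v))"

lemma bilinear_compose_left:
  assumes "bilinear sa sb sc f" and "Vector_Spaces.linear sd sa g"
  shows "bilinear sd sb sc (\<lambda>x. f (g x))"
  using assms Vector_Spaces.linear_compose[OF assms(2), of sc "\<lambda>x. f x _"]
  by (simp add: bilinear_def o_def)

lemma strict_2term_HNA_iff_nijenhuis_peiffer_map:
  "strict_2term_HNA s0 s1 H \<longleftrightarrow>
     nijenhuis_peiffer_map s0 (m00 H) (hN0 H) s1 (m01 H) (m10 H) (hN1 H) (hd H)"
  unfolding strict_2term_HNA_def strict_2term_Ainf_def strict_homotopy_nijenhuis_op_def
    nijenhuis_peiffer_map_def nijenhuis_algebra_def assoc_algebra_def
    nijenhuis_bimodule_def bimodule_def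
  by (simp add: eq_commute[of 0 "_ - _"] eq_commute[of "m00 H (hN0 H _) (hN0 H _)"]
      eq_commute[of "m01 H (hN0 H _) (hN1 H _)"] eq_commute[of "m10 H (hN1 H _) (hN0 H _)"]) auto

context
  fixes sa :: "'k::field \<Rightarrow> 'a::ab_group_add \<Rightarrow> 'a" and m N
    and sm :: "'k \<Rightarrow> 'm::ab_group_add \<Rightarrow> 'm" and l r NM \<phi>
  assumes bimod: "nijenhuis_bimodule sa m N sm l r NM"
    and lin: "Vector_Spaces.linear sm sa \<phi>"
    and \<phi>_NM: "\<And>u. \<phi> (NM u) = N (\<phi> u)"
    and \<phi>_l: "\<And>a u. \<phi> (l a u) = m a (\<phi> u)"
begin

lemma induced_product_nijenhuis_algebra: "nijenhuis_algebra sm (\<lambda>u. l (\<phi> u)) NM"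
proof -
  have "bilinear sm sm sm (\<lambda>u. l (\<phi> u))"
    using bimod lin by (auto simp: nijenhuis_bimodule_def bimodule_def intro: bilinear_compose_left)
  moreover have "l (\<phi> (l (\<phi> u) v)) w = l (\<phi> u) (l (\<phi> v) w)" for u v w
    using bimod by (simp add: \<phi>_l nijenhuis_bimodule_def bimodule_def)
  moreover have "l (\<phi> (NM u)) (NM v) =
      NM (l (\<phi> (NM u)) v + l (\<phi> u) (NM v) - NM (l (\<phi> u) v))" for u v
    using bimod by (simp add: \<phi>_NM nijenhuis_bimodule_def)
  ultimately show ?thesis
    using bimod by (simp add: nijenhuis_algebra_def assoc_algebra_def nijenhuis_bimodule_def)
qed

lemma induced_product_nijenhuis_hom: "nijenhuis_hom sm (\<lambda>u. l (\<phi> u)) NM sa m N \<phi>"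
  using lin by (simp add: nijenhuis_hom_def \<phi>_l \<phi>_NM)

end

lemma crossed_module_NA_iff_nijenhuis_peiffer_map:
  "crossed_module_NA sa sm C \<longleftrightarrow>
     nijenhuis_peiffer_map sa (cmult C) (cN C) sm (cl C) (cr C) (cN1 C) (cphi C) \<and>
     cmult1 C = (\<lambda>u. cl C (cphi C u))"
proof
  assume "crossed_module_NA sa sm C"
  then have alg: "nijenhuis_algebra sa (cmult C) (cN C)"
    and bimod: "nijenhuis_bimodule sa (cmult C) (cN C) sm (cl C) (cr C) (cN1 C)"
    and hom: "nijenhuis_hom sm (cmult1 C) (cN1 C) sa (cmult C) (cN C) (cphi C)"
    and \<phi>_l: "\<And>a u. cphi C (cl C a u) = cmult C a (cphi C u)"
    and \<phi>_r: "\<And>u a. cphi C (cr C u a) = cmult C (cphi C u) a"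
    and product_l: "\<And>u v. cl C (cphi C u) v = cmult1 C u v"
    and product_r: "\<And>u v. cmult1 C u v = cr C u (cphi C v)"
    unfolding crossed_module_NA_def by blast+
  have "cmult1 C = (\<lambda>u. cl C (cphi C u))"
    by (intro ext) (simp add: product_l)
  with alg bimod hom \<phi>_l \<phi>_r product_r
  show "nijenhuis_peiffer_map sa (cmult C) (cN C) sm (cl C) (cr C) (cN1 C) (cphi C) \<and>
      cmult1 C = (\<lambda>u. cl C (cphi C u))"
    by (auto simp: nijenhuis_peiffer_map_def nijenhuis_hom_def)
next
  assume "nijenhuis_peiffer_map sa (cmult C) (cN C) sm (cl C) (cr C) (cN1 C) (cphi C) \<and>
      cmult1 C = (\<lambda>u. cl C (cphi C u))"
  then have product: "cmult1 C = (\<lambda>u. cl C (cphi C u))"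
    and alg: "nijenhuis_algebra sa (cmult C) (cN C)"
    and bimod: "nijenhuis_bimodule sa (cmult C) (cN C) sm (cl C) (cr C) (cN1 C)"
    and lin: "Vector_Spaces.linear sm sa (cphi C)"
    and \<phi>_N1: "\<And>u. cphi C (cN1 C u) = cN C (cphi C u)"
    and \<phi>_l: "\<And>a u. cphi C (cl C a u) = cmult C a (cphi C u)"
    and \<phi>_r: "\<And>u a. cphi C (cr C u a) = cmult C (cphi C u) a"
    and peiffer: "\<And>u v. cl C (cphi C u) v = cr C u (cphi C v)"
    by (simp_all add: nijenhuis_peiffer_map_def)
  have "bimodule sa (cmult C) sm (cl C) (cr C)"
    using bimod by (simp add: nijenhuis_bimodule_def)
  then have assoc_l: "\<And>a b u. cl C (cmult C a b) u = cl C a (cl C b u)"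
    and assoc_lr: "\<And>a u b. cr C (cl C a u) b = cl C a (cr C u b)"
    by (simp_all add: bimodule_def)
  have l_product: "cl C a (cl C (cphi C u) v) = cl C (cphi C (cl C a u)) v" for a u v
    by (simp add: \<phi>_l assoc_l)
  have r_product: "cl C (cphi C (cr C u a)) v = cl C (cphi C u) (cl C a v)" for u a v
    by (simp add: \<phi>_r assoc_l)
  have "nijenhuis_algebra sm (\<lambda>u. cl C (cphi C u)) (cN1 C)"
    using bimod lin \<phi>_N1 \<phi>_l
    by (rule induced_product_nijenhuis_algebra[where l = "cl C" and \<phi> = "cphi C"])
  moreover have "nijenhuis_hom sm (\<lambda>u. cl C (cphi C u)) (cN1 C) sa (cmult C) (cN C) (cphi C)"
    using bimod lin \<phi>_N1 \<phi>_l
    by (rule induced_product_nijenhuis_hom[where l = "cl C" and \<phi> = "cphi C"])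
  ultimately show "crossed_module_NA sa sm C"
    using alg bimod \<phi>_l \<phi>_r peiffer assoc_lr l_product r_product
    unfolding crossed_module_NA_def product by blast
qed

lemma crossed_module_NA_hna_to_cm:
  "strict_2term_HNA s0 s1 H \<Longrightarrow> crossed_module_NA s0 s1 (hna_to_cm H)"
  by (simp add: crossed_module_NA_iff_nijenhuis_peiffer_map
      strict_2term_HNA_iff_nijenhuis_peiffer_map hna_to_cm_def)

lemma strict_2term_HNA_cm_to_hna:
  "crossed_module_NA s0 s1 C \<Longrightarrow> strict_2term_HNA s0 s1 (cm_to_hna C)"
  by (simp add: crossed_module_NA_iff_nijenhuis_peiffer_map
      strict_2term_HNA_iff_nijenhuis_peiffer_map cm_to_hna_def)

lemma cm_to_hna_hna_to_cm: "cm_to_hna (hna_to_cm H) = H"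
  by (simp add: cm_to_hna_def hna_to_cm_def)

lemma hna_to_cm_cm_to_hna: "crossed_module_NA s0 s1 C \<Longrightarrow> hna_to_cm (cm_to_hna C) = C"
  by (simp add: crossed_module_NA_iff_nijenhuis_peiffer_map cm_to_hna_def hna_to_cm_def)

theorem theorem6p9:
  fixes s0 :: "'k::field_char_0 \<Rightarrow> 'a0::ab_group_add \<Rightarrow> 'a0"
    and s1 :: "'k \<Rightarrow> 'a1::ab_group_add \<Rightarrow> 'a1"
  assumes "vector_space s0" and "vector_space s1"
  shows "bij_betw hna_to_cm {H. strict_2term_HNA s0 s1 H} {C. crossed_module_NA s0 s1 C}
       \<and> bij_betw cm_to_hna {C. crossed_module_NA s0 s1 C} {H. strict_2term_HNA s0 s1 H}
       \<and> (\<forall>H. strict_2term_HNA s0 s1 H \<longrightarrow> cm_to_hna (hna_to_cm H) = H)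
       \<and> (\<forall>C. crossed_module_NA s0 s1 C \<longrightarrow> hna_to_cm (cm_to_hna C) = C)"
proof (intro conjI allI impI)
  show "bij_betw hna_to_cm {H. strict_2term_HNA s0 s1 H} {C. crossed_module_NA s0 s1 C}"
    by (rule bij_betw_byWitness[where f' = cm_to_hna])
      (auto simp: crossed_module_NA_hna_to_cm strict_2term_HNA_cm_to_hna
         cm_to_hna_hna_to_cm hna_to_cm_cm_to_hna)
  show "bij_betw cm_to_hna {C. crossed_module_NA s0 s1 C} {H. strict_2term_HNA s0 s1 H}"
    by (rule bij_betw_byWitness[where f' = hna_to_cm])
      (auto simp: crossed_module_NA_hna_to_cm strict_2term_HNA_cm_to_hna
         cm_to_hna_hna_to_cm hna_to_cm_cm_to_hna)
qed (simp_all add: cm_to_hna_hna_to_cm hna_to_cm_cm_to_hna)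

end
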